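(* Let $(A,m)$ be an iterative midpoint set with associated infinitary operation $M\colon A^\omega\to A$. Then for every doubly indexed family $(x_{ij})_{i,j\ge 0}$ of elements of $A$, \[ M_i(M_j\,x_{ij}) = M_l\; m\big(m_{l+1}(x_{0\,(l+1)},\dots,x_{l\,(l+1)},x_{ll}),\; m_{l+1}(x_{(l+1)\,0},\dots,x_{(l+1)\,l},x_{ll})\big). \]
   Context: A midpoint set is a set $A$ with $m\colon A\times A\to A$ satisfying $m(x,x)=x$, $m(x,y)=m(y,x)$, $m(m(x,y),m(z,w))=m(m(x,z),m(y,w))$. It is iterative if for every set $X$ and functions $h\colon X\to A$, $t\colon X\to X$ there is a unique $u\colon X\to A$ with $u(x)=m(h(x),u(t(x)))$; equivalently there is a (unique) $M\colon A^\omega\to A$ with $M_i\,x_i=m(x_0,M_i\,x_{i+1})$ and such that whenever $y_i=m(x_i,y_{i+1})$ for all $i$ then $y_0=M_i\,x_i$. The derived $(n+1)$-ary operations are $m_0(x)=x$ and $m_n(x_0,\dots,x_n)=m(x_0,m_{n-1}(x_1,\dots,x_n))$ for $n\ge1$. *)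

theory Defs
  imports Main
begin

definition midpoint_set :: "('a \<Rightarrow> 'a \<Rightarrow> 'a) \<Rightarrow> bool" where
  "midpoint_set m \<longleftrightarrow>
     (\<forall>x. m x x = x) \<and> (\<forall>x y. m x y = m y x) \<and>
     (\<forall>x y z w. m (m x y) (m z w) = m (m x z) (m y w))"

text \<open>M is the infinitary operation associated with an iterative midpoint set:
  M x = m (x 0) (M (shifted x)), and every solution y of y_i = m(x_i, y_{i+1}) has y_0 = M x.
  (By the equivalence stated in the paper, (A,m) is iterative iff such an M exists; it is then unique.)\<close>
definition iterative_op :: "('a \<Rightarrow> 'a \<Rightarrow> 'a) \<Rightarrow> ((nat \<Rightarrow> 'a) \<Rightarrow> 'a) \<Rightarrow> bool" where
  "iterative_op m M \<longleftrightarrow>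
     (\<forall>x. M x = m (x 0) (M (\<lambda>i. x (Suc i)))) \<and>
     (\<forall>x y. (\<forall>i. y i = m (x i) (y (Suc i))) \<longrightarrow> y 0 = M x)"

text \<open>Derived operations: for a list [x0,...,xn] of length n+1, mlist m gives m_n(x0,...,xn).\<close>
fun mlist :: "('a \<Rightarrow> 'a \<Rightarrow> 'a) \<Rightarrow> 'a list \<Rightarrow> 'a" where
  "mlist m [] = undefined"
| "mlist m [x] = x"
| "mlist m (x # y # ys) = m x (mlist m (y # ys))"

end

theory Submission
  imports Defs
begin

text \<open>Mediality and the uniqueness clause make M a homomorphism from A^\<omega>, with m taken
  pointwise, to A. Let T l = M_i M_j x_(l+i)(l+j) be the value of the square with corner (l,l)
  and H a l = m (M_j x_a(l+1+j)) (M_i x_(l+1+i)a) the averaged tails of row and column a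
  beyond position l. Unfolding M once in both directions peels the hook through (l,l) off
  the square: T l = m (H l l) (m (x l l) (T (l+1))). Hence
  y l = m_(l+1) (H 0 l, ..., H l l, m (x l l) (T (l+1))) satisfies y 0 = T 0 and
  y l = m (z l) (y (l+1)) for the l-th term z l of the right-hand side, and uniqueness
  gives T 0 = M z.\<close>

lemma mlist_snoc: "mlist m (xs @ [p]) = foldr m xs p"
proof (induction xs)
  case Nil
  then show ?case by simp
next
  case (Cons a xs)
  then show ?case by (cases xs) auto
qed

lemma foldr_medial:
  assumes medial: "\<And>x y z w. m (m x y) (m z w) = m (m x z) (m y w)"
  shows "m (foldr m (map f xs) p) (foldr m (map g xs) q) =
         foldr m (map (\<lambda>a. m (f a) (g a)) xs) (m p q)"
  by (induction xs) (simp_all add: medial)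

locale iterative_midpoint_set =
  fixes m :: "'a \<Rightarrow> 'a \<Rightarrow> 'a" and M :: "(nat \<Rightarrow> 'a) \<Rightarrow> 'a"
  assumes midpoint_set: "midpoint_set m" and iterative_op: "iterative_op m M"
begin

lemma idem: "m x x = x"
  and comm: "m x y = m y x"
  and medial: "m (m x y) (m z w) = m (m x z) (m y w)"
  using midpoint_set unfolding midpoint_set_def by blast+

lemma M_unfold: "M x = m (x 0) (M (\<lambda>i. x (Suc i)))"
  using iterative_op unfolding iterative_op_def by blast

lemma M_unique:
  assumes "\<And>i. y i = m (x i) (y (Suc i))"
  shows "y 0 = M x"
  using iterative_op assms unfolding iterative_op_def by blast

lemma M_unfold_shift: "M (\<lambda>j. a (i + j)) = m (a i) (M (\<lambda>j. a (Suc i + j)))"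
  using M_unfold[of "\<lambda>j. a (i + j)"] by simp

lemma M_m: "M (\<lambda>i. m (a i) (b i)) = m (M a) (M b)"
proof -
  define y where "y i = m (M (\<lambda>j. a (i + j))) (M (\<lambda>j. b (i + j)))" for i
  have "y i = m (m (a i) (b i)) (y (Suc i))" for i
    unfolding y_def M_unfold_shift[of a i] M_unfold_shift[of b i] by (rule medial)
  then have "y 0 = M (\<lambda>i. m (a i) (b i))"
    by (rule M_unique)
  then show ?thesis
    unfolding y_def by simp
qed

lemma m_foldr_same_base:
  "m (foldr m (map f xs) p) (foldr m (map g xs) p) = foldr m (map (\<lambda>a. m (f a) (g a)) xs) p"
  using foldr_medial[of m f xs p g p] medial idem by simp

definition square_tail :: "(nat \<Rightarrow> nat \<Rightarrow> 'a) \<Rightarrow> nat \<Rightarrow> 'a" where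
  "square_tail x l = M (\<lambda>i. M (\<lambda>j. x (l + i) (l + j)))"

definition hook_tail :: "(nat \<Rightarrow> nat \<Rightarrow> 'a) \<Rightarrow> nat \<Rightarrow> nat \<Rightarrow> 'a" where
  "hook_tail x a l = m (M (\<lambda>j. x a (Suc l + j))) (M (\<lambda>i. x (Suc l + i) a))"

lemma hook_tail_Suc:
  "hook_tail x a l = m (m (x a (Suc l)) (x (Suc l) a)) (hook_tail x a (Suc l))"
  unfolding hook_tail_def M_unfold_shift[of "x a" "Suc l"]
    M_unfold_shift[of "\<lambda>i. x i a" "Suc l"]
  by (rule medial)

lemma square_tail_Suc:
  "square_tail x l = m (hook_tail x l l) (m (x l l) (square_tail x (Suc l)))"
proof -
  have lower_rows: "(\<lambda>i. M (\<lambda>j. x (Suc l + i) (l + j))) =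
      (\<lambda>i. m (x (Suc l + i) l) (M (\<lambda>j. x (Suc l + i) (Suc l + j))))"
    using M_unfold_shift[of "x (Suc l + _)" l] by simp
  have "square_tail x l =
      m (M (\<lambda>j. x l (l + j))) (M (\<lambda>i. M (\<lambda>j. x (Suc l + i) (l + j))))"
    unfolding square_tail_def using M_unfold_shift[of "\<lambda>i. M (\<lambda>j. x i (l + j))" l] by simp
  also have "\<dots> = m (m (x l l) (M (\<lambda>j. x l (Suc l + j))))
      (m (M (\<lambda>i. x (Suc l + i) l)) (square_tail x (Suc l)))"
    unfolding lower_rows M_m M_unfold_shift[of "x l" l] square_tail_def by simp
  also have "\<dots> = m (hook_tail x l l) (m (x l l) (square_tail x (Suc l)))"
    unfolding hook_tail_def by (metis comm medial)
  finally show ?thesis .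
qed

theorem M_M_eq_M_hooks:
  "M (\<lambda>i. M (\<lambda>j. x i j)) =
   M (\<lambda>l. foldr m (map (\<lambda>k. m (x k (Suc l)) (x (Suc l) k)) [0..<Suc l]) (x l l))"
    (is "_ = M ?z")
proof -
  define y where
    "y l = foldr m (map (\<lambda>a. hook_tail x a l) [0..<Suc l]) (m (x l l) (square_tail x (Suc l)))"
    for l
  have "y l = m (?z l) (y (Suc l))" for l
  proof -
    have "y (Suc l) = foldr m (map (\<lambda>a. hook_tail x a (Suc l)) [0..<Suc l]) (square_tail x (Suc l))"
      unfolding y_def square_tail_Suc[of x "Suc l"] by simp
    then have "m (?z l) (y (Suc l)) = foldr m
        (map (\<lambda>a. m (m (x a (Suc l)) (x (Suc l) a)) (hook_tail x a (Suc l))) [0..<Suc l])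
        (m (x l l) (square_tail x (Suc l)))"
      using foldr_medial[of m] medial by simp
    then show ?thesis
      unfolding y_def hook_tail_Suc[symmetric] by simp
  qed
  then have "y 0 = M ?z"
    by (rule M_unique)
  moreover have "y 0 = square_tail x 0"
    unfolding y_def square_tail_Suc[of x 0] by simp
  ultimately show ?thesis
    unfolding square_tail_def by simp
qed

end

theorem mainTheorem5:
  fixes m :: "'a \<Rightarrow> 'a \<Rightarrow> 'a" and M :: "(nat \<Rightarrow> 'a) \<Rightarrow> 'a"
    and x :: "nat \<Rightarrow> nat \<Rightarrow> 'a"
  assumes "midpoint_set m" and "iterative_op m M"
  shows "M (\<lambda>i. M (\<lambda>j. x i j)) =
         M (\<lambda>l. m (mlist m (map (\<lambda>k. x k (Suc l)) [0..<Suc l] @ [x l l]))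
                   (mlist m (map (\<lambda>k. x (Suc l) k) [0..<Suc l] @ [x l l])))"
proof -
  interpret iterative_midpoint_set m M
    using assms by unfold_locales
  show ?thesis
    unfolding mlist_snoc m_foldr_same_base by (rule M_M_eq_M_hooks)
qed

end
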